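(* Let $I, J$ be completely regular Hausdorff spaces, $X, Y$ Hausdorff locally convex topological vector spaces over $\mathbb{C}$, with $X\otimes Y$ given a locally convex Hausdorff topology for which $(x,y)\mapsto x\otimes y$ is continuous. Let $V$, $W$, $U$ be Nachbin families on $I$, $J$, $I \times J$ respectively. Suppose (i) for all $(t, s) \in I \times J$, $\overline{CV_0(I, X)(t) \otimes CW_0(J, Y)(s)} = \overline{CU_{0}(I \times J, X \otimes Y)(t, s)}$, and (ii) $CV_{0}(I, X) \otimes CW_{0}(J, Y) \subset CU_{0}(I \times J, X \otimes Y)$. Then $CU_{0}(I \times J, X \otimes Y)$ is the closure of $CV_{0}(I, X) \otimes CW_{0}(J, Y)$ in the topology of $CU_{0}(I \times J, X \otimes Y)$.
   Context: A Nachbin family on $\Omega$ is a set $V$ of upper semicontinuous functions $\Omega\to\mathbb{R}_+$ such that for $v_1,v_2\in V$ there are $\lambda\ge0$, $w\in V$ with $v_1,v_2\le\lambda w$, and for each $x$ some $v\in V$ has $v(x)>0$. For a locally convex space $Z$ with seminorms $\mathfrak{A}$, $g:\Omega\to Z$ vanishes at infinity if for each $p\in\mathfrak{A}$, $\epsilon>0$ the closure of $\{x:p(g(x))\ge\epsilon\}$ is compact; $CV_0(\Omega,Z)=\{f\in C(\Omega,Z):vf\text{ vanishes at infinity }\forall v\in V\}$, topologized by seminorms $f\mapsto\sup_x v(x)p(f(x))$. For a set $\mathcal{W}$ of functions, $\mathcal{W}(s)=\{f(s):f\in\mathcal{W}\}$. For $f:I\to X$, $g:J\to Y$, $(f\otimes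 g)(t,s)=f(t)\otimes g(s)$, and $\mathcal{W}\otimes\mathcal{V}=\mathrm{span}\{f\otimes g\}$; for subsets $X_1\subset X$, $Y_1\subset Y$, $X_1\otimes Y_1=\mathrm{span}\{x\otimes y:x\in X_1,y\in Y_1\}$. *)

theory Defs
  imports "HOL-Analysis.Analysis"
begin

definition seminorm :: "(complex \<Rightarrow> 'a::ab_group_add \<Rightarrow> 'a) \<Rightarrow> ('a \<Rightarrow> real) \<Rightarrow> bool" where
  "seminorm s p \<longleftrightarrow> (\<forall>x y. p (x + y) \<le> p x + p y) \<and> (\<forall>c x. p (s c x) = cmod c * p x)"

definition locally_convex_space ::
  "(complex \<Rightarrow> 'a::ab_group_add \<Rightarrow> 'a) \<Rightarrow> ('a \<Rightarrow> real) set \<Rightarrow> bool" where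
  "locally_convex_space s A \<longleftrightarrow> vector_space s \<and> (\<forall>p\<in>A. seminorm s p)"

text \<open>The locally convex topology generated by a family of seminorms
  (subbase: all open seminorm balls; UNIV is added so the topspace is always UNIV).\<close>
definition lc_topology :: "('a::ab_group_add \<Rightarrow> real) set \<Rightarrow> 'a topology" where
  "lc_topology A = topology_generated_by
     (insert UNIV {{y. p (y - x) < e} | p x e. p \<in> A \<and> e > 0})"

definition upper_semicontinuous_on :: "'a topology \<Rightarrow> ('a \<Rightarrow> real) \<Rightarrow> bool" where
  "upper_semicontinuous_on T v \<longleftrightarrow> (\<forall>r. openin T {x \<in> topspace T. v x < r})"

definition nachbin_family :: "'a topology \<Rightarrow> ('a \<Rightarrow> real) set \<Rightarrow> bool" where
  "nachbin_family T V \<longleftrightarrow>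
     (\<forall>v\<in>V. upper_semicontinuous_on T v \<and> (\<forall>x\<in>topspace T. 0 \<le> v x)) \<and>
     (\<forall>v1\<in>V. \<forall>v2\<in>V. \<exists>l\<ge>0. \<exists>w\<in>V. \<forall>x\<in>topspace T. v1 x \<le> l * w x \<and> v2 x \<le> l * w x) \<and>
     (\<forall>x\<in>topspace T. \<exists>v\<in>V. v x > 0)"

definition vanishes_at_infinity :: "'a topology \<Rightarrow> ('z \<Rightarrow> real) set \<Rightarrow> ('a \<Rightarrow> 'z) \<Rightarrow> bool" where
  "vanishes_at_infinity T A g \<longleftrightarrow>
     (\<forall>p\<in>A. \<forall>\<epsilon>>0. compactin T (T closure_of {x \<in> topspace T. p (g x) \<ge> \<epsilon>}))"

text \<open>Functions are taken to be 0 outside topspace T (so that sets of functions are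
  determined by their values on the space).\<close>
definition CV0 :: "'a topology \<Rightarrow> ('a \<Rightarrow> real) set \<Rightarrow> (complex \<Rightarrow> 'z::ab_group_add \<Rightarrow> 'z)
    \<Rightarrow> ('z \<Rightarrow> real) set \<Rightarrow> ('a \<Rightarrow> 'z) set" where
  "CV0 T V s A = {f. continuous_map T (lc_topology A) f \<and> (\<forall>x. x \<notin> topspace T \<longrightarrow> f x = 0) \<and>
       (\<forall>v\<in>V. vanishes_at_infinity T A (\<lambda>x. s (complex_of_real (v x)) (f x)))}"

text \<open>The seminorm f |-> sup_x v(x) p(f(x)) (with sup of the empty set read as 0).\<close>
definition weighted_seminorm :: "'a topology \<Rightarrow> ('a \<Rightarrow> real) \<Rightarrow> ('z \<Rightarrow> real) \<Rightarrow> ('a \<Rightarrow> 'z) \<Rightarrow> real" where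
  "weighted_seminorm T v p f = Sup (insert 0 ((\<lambda>x. v x * p (f x)) ` topspace T))"

definition CV0_topology :: "'a topology \<Rightarrow> ('a \<Rightarrow> real) set \<Rightarrow> (complex \<Rightarrow> 'z::ab_group_add \<Rightarrow> 'z)
    \<Rightarrow> ('z \<Rightarrow> real) set \<Rightarrow> ('a \<Rightarrow> 'z) topology" where
  "CV0_topology T V s A = subtopology
     (topology_generated_by (insert UNIV
        {{g. weighted_seminorm T v p (\<lambda>x. g x - f x) < e} | v p f e. v \<in> V \<and> p \<in> A \<and> e > 0}))
     (CV0 T V s A)"

text \<open>b :: 'x => 'y => 't realises 't as the algebraic tensor product of 'x and 'y:
  b is bilinear, its range spans 't, and whenever x_1..x_n are linearly independent and
  sum_i b x_i y_i = 0 then all y_i = 0.\<close>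
definition is_tensor_product ::
  "(complex \<Rightarrow> 'x::ab_group_add \<Rightarrow> 'x) \<Rightarrow> (complex \<Rightarrow> 'y::ab_group_add \<Rightarrow> 'y)
   \<Rightarrow> (complex \<Rightarrow> 't::ab_group_add \<Rightarrow> 't) \<Rightarrow> ('x \<Rightarrow> 'y \<Rightarrow> 't) \<Rightarrow> bool" where
  "is_tensor_product sX sY sT b \<longleftrightarrow>
     (\<forall>y. Vector_Spaces.linear sX sT (\<lambda>x. b x y)) \<and> (\<forall>x. Vector_Spaces.linear sY sT (b x)) \<and>
     module.span sT {b x y | x y. True} = UNIV \<and>
     (\<forall>(n::nat) xs ys. inj_on xs {..<n} \<and> \<not> module.dependent sX (xs ` {..<n}) \<and>
        (\<Sum>i<n. b (xs i) (ys i)) = 0 \<longrightarrow> (\<forall>i<n. ys i = 0))"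

definition tensor_set :: "(complex \<Rightarrow> 't::ab_group_add \<Rightarrow> 't) \<Rightarrow> ('x \<Rightarrow> 'y \<Rightarrow> 't)
    \<Rightarrow> 'x set \<Rightarrow> 'y set \<Rightarrow> 't set" where
  "tensor_set sT b X1 Y1 = module.span sT {b x y | x y. x \<in> X1 \<and> y \<in> Y1}"

definition tensor_fun_set :: "(complex \<Rightarrow> 't::ab_group_add \<Rightarrow> 't) \<Rightarrow> ('x \<Rightarrow> 'y \<Rightarrow> 't)
    \<Rightarrow> ('i \<Rightarrow> 'x) set \<Rightarrow> ('j \<Rightarrow> 'y) set \<Rightarrow> ('i \<times> 'j \<Rightarrow> 't) set" where
  "tensor_fun_set sT b W1 V1 =
     {h. \<exists>(n::nat) c f g. (\<forall>i<n. f i \<in> W1 \<and> g i \<in> V1) \<and>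
         h = (\<lambda>(t, s). \<Sum>i<n. sT (c i) (b (f i t) (g i s)))}"

end

theory Submission
  imports Defs
begin

text \<open>
  Density is tested against the basic neighbourhoods of the weighted topology: finitely many pairs
  of a weight \<open>v \<in> U\<close> and a seminorm \<open>p\<close>, and \<open>\<epsilon> > 0\<close>. Since \<open>f\<close> vanishes at infinity,
  \<open>v x * p (f x) < \<epsilon>\<close> already holds outside a compact set \<open>K\<close>. At a point \<open>z = (t, s)\<close> of \<open>K\<close>,
  hypothesis (i) yields an element of \<open>CV\<^sub>0(I, X) \<otimes> CW\<^sub>0(J, Y)\<close> whose value at \<open>z\<close> is close to
  \<open>f z\<close>; by (ii) it is continuous, and the weighted error is upper semicontinuous, so it stays small
  on a neighbourhood of \<open>z\<close>. Complete regularity supplies bump functions \<open>\<alpha>(t) \<beta>(s)\<close> equal to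
  \<open>1\<close> near \<open>z\<close> and supported in that neighbourhood. Finitely many of the plateaus cover \<open>K\<close>, and
  with \<open>a\<^sub>j = \<alpha>\<^sub>j \<beta>\<^sub>j\<close> the weights \<open>a\<^sub>j \<Prod>\<^sub>i\<^sub><\<^sub>j (1 - a\<^sub>i)\<close> add up to
  \<open>1 - \<Prod>\<^sub>j (1 - a\<^sub>j)\<close>, which is \<open>1\<close> on \<open>K\<close>. The glued function \<open>\<Sum>\<^sub>j a\<^sub>j \<Prod>\<^sub>i\<^sub><\<^sub>j (1 - a\<^sub>i) h\<^sub>j\<close> is
  again a tensor function, because \<open>CV\<^sub>0\<close> is stable under multiplication by continuous functions
  with values in \<open>[0, 1]\<close>, and it is \<open>\<epsilon>\<close>-close to \<open>f\<close> by convexity of the seminorms.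
\<close>

section \<open>Seminorms\<close>

lemma seminorm_add_le: "seminorm s p \<Longrightarrow> p (x + y) \<le> p x + p y"
  unfolding seminorm_def by blast

lemma seminorm_scale_real: "seminorm s p \<Longrightarrow> p (s (complex_of_real r) x) = \<bar>r\<bar> * p x"
  unfolding seminorm_def by simp

lemma seminorm_zero:
  assumes "module s" "seminorm s p"
  shows "p 0 = 0"
  using seminorm_scale_real[OF assms(2), of 0 0] module.scale_zero_left[OF assms(1)] by simp

lemma seminorm_minus:
  assumes "module s" "seminorm s p"
  shows "p (- x) = p x"
  using seminorm_scale_real[OF assms(2), of "-1" x] module.scale_minus_left[OF assms(1)]
  by (simp add: module.scale_one[OF assms(1)])

lemma seminorm_diff_commute:
  assumes "module s" "seminorm s p"
  shows "p (x - y) = p (y - x)"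
  using seminorm_minus[OF assms, of "x - y"] by simp

lemma seminorm_nonneg:
  assumes "module s" "seminorm s p"
  shows "0 \<le> p x"
  using seminorm_add_le[OF assms(2), of x "- x"] seminorm_zero[OF assms] seminorm_minus[OF assms]
  by simp

lemma seminorm_diff_triangle: "seminorm s p \<Longrightarrow> p (x - y) \<le> p (x - z) + p (z - y)"
  using seminorm_add_le[of s p "x - z" "z - y"] by simp

lemma seminorm_sum_le:
  assumes "module s" "seminorm s p"
  shows "p (\<Sum>i\<in>A. F i) \<le> (\<Sum>i\<in>A. p (F i))"
proof (induction A rule: infinite_finite_induct)
  case (insert i A)
  then show ?case using seminorm_add_le[OF assms(2), of "F i" "sum F A"] by simp
qed (simp_all add: seminorm_zero[OF assms])

lemma locally_convex_spaceD:
  "locally_convex_space s A \<Longrightarrow> module s \<and> (\<forall>p\<in>A. seminorm s p)"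
  unfolding locally_convex_space_def module_iff_vector_space by simp

lemma seminorm_convex_combination_le:
  assumes ms: "module s" and p: "seminorm s p" and w: "0 \<le> w"
    and c: "\<forall>j\<in>J. 0 \<le> c j" "0 \<le> c0" "(\<Sum>j\<in>J. c j) + c0 = 1"
    and near: "\<forall>j\<in>J. 0 < c j \<longrightarrow> w * p (y j - x) \<le> \<epsilon>"
    and small: "0 < c0 \<longrightarrow> w * p x \<le> \<epsilon>"
  shows "w * p ((\<Sum>j\<in>J. s (complex_of_real (c j)) (y j)) - x) \<le> \<epsilon>"
proof -
  interpret module s by fact
  have "x = s (complex_of_real ((\<Sum>j\<in>J. c j) + c0)) x"
    using c(3) by simp
  also have "\<dots> = (\<Sum>j\<in>J. s (complex_of_real (c j)) x) + s (complex_of_real c0) x"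
    by (simp add: scale_left_distrib scale_sum_left)
  finally have "(\<Sum>j\<in>J. s (complex_of_real (c j)) (y j)) - x
      = (\<Sum>j\<in>J. s (complex_of_real (c j)) (y j)) -
        ((\<Sum>j\<in>J. s (complex_of_real (c j)) x) + s (complex_of_real c0) x)"
    by (rule arg_cong)
  also have "\<dots> = (\<Sum>j\<in>J. s (complex_of_real (c j)) (y j - x)) + - s (complex_of_real c0) x"
    by (simp add: scale_right_diff_distrib sum_subtractf)
  finally have split: "(\<Sum>j\<in>J. s (complex_of_real (c j)) (y j)) - x
      = (\<Sum>j\<in>J. s (complex_of_real (c j)) (y j - x)) + - s (complex_of_real c0) x" .
  have "p ((\<Sum>j\<in>J. s (complex_of_real (c j)) (y j)) - x)
      \<le> (\<Sum>j\<in>J. p (s (complex_of_real (c j)) (y j - x))) + p (- s (complex_of_real c0) x)"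
    unfolding split
    by (rule order.trans[OF seminorm_add_le[OF p] add_mono[OF seminorm_sum_le[OF ms p] order.refl]])
  also have "\<dots> = (\<Sum>j\<in>J. c j * p (y j - x)) + c0 * p x"
    using c(1,2) by (simp add: seminorm_minus[OF ms p] seminorm_scale_real[OF p])
  finally have "w * p ((\<Sum>j\<in>J. s (complex_of_real (c j)) (y j)) - x)
      \<le> w * ((\<Sum>j\<in>J. c j * p (y j - x)) + c0 * p x)"
    using w by (rule mult_left_mono)
  also have "\<dots> = (\<Sum>j\<in>J. c j * (w * p (y j - x))) + c0 * (w * p x)"
    by (simp add: distrib_left sum_distrib_left mult.left_commute)
  also have "\<dots> \<le> (\<Sum>j\<in>J. c j * \<epsilon>) + c0 * \<epsilon>"
  proof (intro add_mono sum_mono)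
    show "c j * (w * p (y j - x)) \<le> c j * \<epsilon>" if "j \<in> J" for j
      using that c(1) near by (cases "c j = 0") (auto intro: mult_left_mono)
    show "c0 * (w * p x) \<le> c0 * \<epsilon>"
      using c(2) small by (cases "c0 = 0") (auto intro: mult_left_mono)
  qed
  also have "\<dots> = \<epsilon>"
    using c(3) by (metis distrib_right mult_1 sum_distrib_right)
  finally show ?thesis .
qed

lemma sum_mult_prod_one_minus:
  fixes a :: "nat \<Rightarrow> 'a::comm_ring_1"
  shows "(\<Sum>j<n. a j * (\<Prod>i<j. 1 - a i)) + (\<Prod>i<n. 1 - a i) = 1"
  by (induction n) (simp_all add: algebra_simps)

lemma seminorm_partition_combination_le:
  fixes n :: nat
  assumes ms: "module s" and p: "seminorm s p" and w: "0 \<le> w"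
    and a: "\<forall>j<n. 0 \<le> a j \<and> a j \<le> 1"
    and near: "\<forall>j<n. 0 < a j \<longrightarrow> w * p (y j - x) \<le> \<epsilon>"
    and small: "(\<forall>j<n. a j < 1) \<longrightarrow> w * p x \<le> \<epsilon>"
  shows "w * p ((\<Sum>j<n. s (complex_of_real (a j * (\<Prod>i<j. 1 - a i))) (y j)) - x) \<le> \<epsilon>"
proof (rule seminorm_convex_combination_le[OF ms p w])
  have prod_nonneg: "0 \<le> (\<Prod>i<j. 1 - a i)" if "j \<le> n" for j
    using a that by (intro prod_nonneg) auto
  show "\<forall>j\<in>{..<n}. 0 \<le> a j * (\<Prod>i<j. 1 - a i)"
    using a prod_nonneg by simp
  show "0 \<le> (\<Prod>i<n. 1 - a i)"
    by (rule prod_nonneg) simp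
  show "(\<Sum>j\<in>{..<n}. a j * (\<Prod>i<j. 1 - a i)) + (\<Prod>i<n. 1 - a i) = 1"
    by (rule sum_mult_prod_one_minus)
  show "\<forall>j\<in>{..<n}. 0 < a j * (\<Prod>i<j. 1 - a i) \<longrightarrow> w * p (y j - x) \<le> \<epsilon>"
    using near a by (auto simp: zero_less_mult_iff)
  show "0 < (\<Prod>i<n. 1 - a i) \<longrightarrow> w * p x \<le> \<epsilon>"
  proof
    assume "0 < (\<Prod>i<n. 1 - a i)"
    then have "\<forall>j<n. a j < 1"
      using a by (metis diff_self less_le lessThan_iff prod_zero_iff finite_lessThan)
    with small show "w * p x \<le> \<epsilon>" by blast
  qed
qed

section \<open>The topology of a family of seminorms\<close>

lemma topspace_lc_topology [simp]: "topspace (lc_topology A) = UNIV"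
  unfolding lc_topology_def by simp

lemma openin_lc_topology_ball:
  "p \<in> A \<Longrightarrow> 0 < e \<Longrightarrow> openin (lc_topology A) {y. p (y - x) < e}"
  unfolding lc_topology_def by (rule topology_generated_by_Basis) blast

lemma openin_lc_topology_finite_balls:
  assumes "finite Q" "Q \<subseteq> A" "0 < e"
  shows "openin (lc_topology A) {y. \<forall>p\<in>Q. p (y - x) < e}"
proof -
  have "openin (lc_topology A) ((\<Inter>p\<in>Q. {y. p (y - x) < e}) \<inter> topspace (lc_topology A))"
    using assms by (intro openin_INT openin_lc_topology_ball) auto
  then show ?thesis by (simp add: Int_absorb2 INTER_eq)
qed

lemma in_lc_closure_of_approx:
  assumes ms: "module s" and sn: "\<forall>p\<in>A. seminorm s p"
    and x: "x \<in> lc_topology A closure_of E" and Q: "finite Q" "Q \<subseteq> A" and "0 < \<delta>"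
  shows "\<exists>y\<in>E. \<forall>p\<in>Q. p (y - x) < \<delta>"
proof -
  let ?N = "{y. \<forall>p\<in>Q. p (y - x) < \<delta>}"
  have "openin (lc_topology A) ?N"
    using Q \<open>0 < \<delta>\<close> by (rule openin_lc_topology_finite_balls)
  moreover have "x \<in> ?N"
  proof (simp, intro ballI)
    fix p assume "p \<in> Q"
    with Q(2) sn have "seminorm s p" by blast
    with \<open>0 < \<delta>\<close> show "p 0 < \<delta>" by (simp add: seminorm_zero[OF ms \<open>seminorm s p\<close>])
  qed
  ultimately have "\<exists>y. y \<in> E \<and> y \<in> ?N"
    using x[unfolded in_closure_of, THEN conjunct2, rule_format, of ?N] by simp
  then show ?thesis by blast
qed

lemma openin_continuous_map_lc_ball:
  assumes "continuous_map T (lc_topology A) F" "p \<in> A" "0 < e"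
  shows "openin T {t \<in> topspace T. p (F t - x) < e}"
  using openin_continuous_map_preimage[OF assms(1) openin_lc_topology_ball[OF assms(2,3)]] by simp

lemma continuous_map_into_lc_topology:
  assumes "\<And>p x e. p \<in> A \<Longrightarrow> 0 < e \<Longrightarrow> openin T {t \<in> topspace T. p (F t - x) < e}"
  shows "continuous_map T (lc_topology A) F"
  unfolding lc_topology_def
proof (rule continuous_on_generated_topo)
  fix S assume "S \<in> insert UNIV {{y. p (y - x) < e} |p x e. p \<in> A \<and> 0 < e}"
  then show "openin T (F -` S \<inter> topspace T)"
  proof
    assume "S \<in> {{y. p (y - x) < e} |p x e. p \<in> A \<and> 0 < e}"
    then obtain p x e where "p \<in> A" "0 < e" "S = {y. p (y - x) < e}" by blast
    then show ?thesis using assms[of p e x] by (simp add: Int_def conj_commute)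
  qed simp
qed simp

lemma continuous_map_into_lc_topology_at:
  assumes sn: "\<forall>p\<in>A. seminorm s p"
    and near: "\<And>p t0 (e::real). p \<in> A \<Longrightarrow> t0 \<in> topspace T \<Longrightarrow> 0 < e \<Longrightarrow>
      \<exists>N. openin T N \<and> t0 \<in> N \<and> (\<forall>t\<in>N. p (F t - F t0) < e)"
  shows "continuous_map T (lc_topology A) F"
proof (rule continuous_map_into_lc_topology)
  fix p x and e :: real assume p: "p \<in> A" and "0 < e"
  show "openin T {t \<in> topspace T. p (F t - x) < e}"
  proof (subst openin_subopen, intro ballI)
    fix t0 assume t0: "t0 \<in> {t \<in> topspace T. p (F t - x) < e}"
    then have "t0 \<in> topspace T" "0 < e - p (F t0 - x)" by auto
    from near[OF p this] obtain N
      where N: "openin T N" "t0 \<in> N" "\<forall>t\<in>N. p (F t - F t0) < e - p (F t0 - x)"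
      by blast
    have "N \<subseteq> {t \<in> topspace T. p (F t - x) < e}"
    proof
      fix t assume t: "t \<in> N"
      have "p (F t - x) \<le> p (F t - F t0) + p (F t0 - x)"
        using seminorm_diff_triangle[of s p "F t" x "F t0"] sn p by blast
      then show "t \<in> {t \<in> topspace T. p (F t - x) < e}"
        using t N(3) openin_subset[OF N(1)] by fastforce
    qed
    then show "\<exists>N. openin T N \<and> t0 \<in> N \<and> N \<subseteq> {t \<in> topspace T. p (F t - x) < e}"
      using N by blast
  qed
qed

lemma continuous_map_seminorm_diff:
  assumes ms: "module s" and p: "seminorm s p" "p \<in> A"
    and F: "continuous_map T (lc_topology A) F"
  shows "continuous_map T euclideanreal (\<lambda>t. p (F t - y))"
  unfolding continuous_map_upper_lower_semicontinuous_lt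
proof (intro conjI allI)
  fix r
  show "openin T {t \<in> topspace T. p (F t - y) < r}"
  proof (cases "0 < r")
    case False
    then have "{t \<in> topspace T. p (F t - y) < r} = {}"
      using seminorm_nonneg[OF ms p(1)] by (smt (verit, best) Collect_empty_eq)
    then show ?thesis by (metis openin_empty)
  qed (rule openin_continuous_map_lc_ball[OF F p(2)])
  show "openin T {t \<in> topspace T. r < p (F t - y)}"
  proof (subst openin_subopen, intro ballI)
    fix t0 assume t0: "t0 \<in> {t \<in> topspace T. r < p (F t - y)}"
    let ?N = "{t \<in> topspace T. p (F t - F t0) < p (F t0 - y) - r}"
    have "openin T ?N"
      using t0 by (intro openin_continuous_map_lc_ball[OF F p(2)]) simp
    moreover have "t0 \<in> ?N" using t0 seminorm_zero[OF ms p(1)] by simp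
    moreover have "?N \<subseteq> {t \<in> topspace T. r < p (F t - y)}"
    proof clarify
      fix t assume "t \<in> topspace T" "p (F t - F t0) < p (F t0 - y) - r"
      moreover have "p (F t0 - y) \<le> p (F t - F t0) + p (F t - y)"
        using seminorm_diff_triangle[OF p(1), of "F t0" y "F t"] seminorm_diff_commute[OF ms p(1)]
        by simp
      ultimately show "r < p (F t - y)" by simp
    qed
    ultimately show "\<exists>N. openin T N \<and> t0 \<in> N \<and> N \<subseteq> {t \<in> topspace T. r < p (F t - y)}"
      by blast
  qed
qed

lemma continuous_map_lc_topology_diff:
  assumes ms: "module s" and sn: "\<forall>p\<in>A. seminorm s p"
    and F: "continuous_map T (lc_topology A) F" and G: "continuous_map T (lc_topology A) G"
  shows "continuous_map T (lc_topology A) (\<lambda>t. F t - G t)"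
proof (rule continuous_map_into_lc_topology_at[OF sn])
  fix p t0 and e :: real assume p: "p \<in> A" and "t0 \<in> topspace T" "0 < e"
  then have snp: "seminorm s p" using sn by blast
  let ?N = "{t \<in> topspace T. p (F t - F t0) < e / 2} \<inter> {t \<in> topspace T. p (G t - G t0) < e / 2}"
  have "openin T ?N"
    using \<open>0 < e\<close> by (intro openin_Int openin_continuous_map_lc_ball[OF F p] openin_continuous_map_lc_ball[OF G p]) auto
  moreover have "t0 \<in> ?N"
    using \<open>t0 \<in> topspace T\<close> \<open>0 < e\<close> by (simp add: seminorm_zero[OF ms snp])
  moreover have "p (F t - G t - (F t0 - G t0)) < e" if "t \<in> ?N" for t
  proof -
    have "p (F t - G t - (F t0 - G t0)) \<le> p (F t - F t0) + p (- (G t - G t0))"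
      using seminorm_add_le[OF snp, of "F t - F t0" "- (G t - G t0)"] by (simp add: algebra_simps)
    with that show ?thesis by (simp add: seminorm_diff_commute[OF ms snp, of "G t0"])
  qed
  ultimately show "\<exists>N. openin T N \<and> t0 \<in> N \<and> (\<forall>t\<in>N. p (F t - G t - (F t0 - G t0)) < e)"
    by blast
qed

lemma continuous_map_lc_topology_scale:
  assumes ms: "module s" and sn: "\<forall>p\<in>A. seminorm s p"
    and F: "continuous_map T (lc_topology A) F" and \<alpha>: "continuous_map T euclideanreal \<alpha>"
  shows "continuous_map T (lc_topology A) (\<lambda>t. s (complex_of_real (\<alpha> t)) (F t))"
proof (rule continuous_map_into_lc_topology_at[OF sn])
  interpret module s by fact
  fix p t0 and e :: real assume p: "p \<in> A" and t0: "t0 \<in> topspace T" and "0 < e"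
  have snp: "seminorm s p" using sn p by blast
  define g where "g t = \<bar>\<alpha> t - \<alpha> t0\<bar> * p (F t) + \<bar>\<alpha> t0\<bar> * p (F t - F t0)" for t
  have "continuous_map T euclideanreal (\<lambda>t. p (F t))"
    using continuous_map_seminorm_diff[OF ms snp p F, of 0] by simp
  then have "continuous_map T euclideanreal g"
    unfolding g_def using continuous_map_seminorm_diff[OF ms snp p F] \<alpha>
    by (intro continuous_intros)
  from openin_continuous_map_preimage[OF this, of "{..<e}"]
  have "openin T {t \<in> topspace T. g t < e}" by simp
  moreover have "t0 \<in> {t \<in> topspace T. g t < e}"
    using t0 \<open>0 < e\<close> by (simp add: g_def seminorm_zero[OF ms snp])
  moreover have "p (s (complex_of_real (\<alpha> t)) (F t) - s (complex_of_real (\<alpha> t0)) (F t0)) \<le> g t" for t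
  proof -
    have "s (complex_of_real (\<alpha> t)) (F t) - s (complex_of_real (\<alpha> t0)) (F t0)
        = s (complex_of_real (\<alpha> t - \<alpha> t0)) (F t) + s (complex_of_real (\<alpha> t0)) (F t - F t0)"
      by (simp add: scale_right_diff_distrib scale_left_diff_distrib)
    also have "p \<dots> \<le> g t"
      unfolding g_def seminorm_scale_real[OF snp, symmetric] by (rule seminorm_add_le[OF snp])
    finally show ?thesis .
  qed
  ultimately show "\<exists>N. openin T N \<and> t0 \<in> N \<and>
      (\<forall>t\<in>N. p (s (complex_of_real (\<alpha> t)) (F t) - s (complex_of_real (\<alpha> t0)) (F t0)) < e)"
    by (blast intro: le_less_trans)
qed

lemma upper_semicontinuous_on_mult:
  assumes f: "upper_semicontinuous_on X f" "\<forall>x\<in>topspace X. 0 \<le> f x"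
    and g: "upper_semicontinuous_on X g" "\<forall>x\<in>topspace X. 0 \<le> g x"
  shows "upper_semicontinuous_on X (\<lambda>x. f x * g x)"
  unfolding upper_semicontinuous_on_def
proof (intro allI, subst openin_subopen, intro ballI)
  fix r x0 assume x0: "x0 \<in> {x \<in> topspace X. f x * g x < r}"
  have fg0: "0 \<le> f x0" "0 \<le> g x0" using f(2) g(2) x0 by auto
  define c where "c = f x0 + g x0 + 1"
  define \<eta> where "\<eta> = min 1 ((r - f x0 * g x0) / (2 * c))"
  have "0 < c" using fg0 by (simp add: c_def)
  then have "0 < \<eta>" "\<eta> \<le> 1" using x0 by (auto simp: \<eta>_def)
  have "\<eta> * c \<le> (r - f x0 * g x0) / (2 * c) * c"
    using \<open>0 < c\<close> by (intro mult_right_mono) (auto simp: \<eta>_def)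
  also have "\<dots> = (r - f x0 * g x0) / 2"
    using \<open>0 < c\<close> by simp
  finally have \<eta>c: "\<eta> * c \<le> (r - f x0 * g x0) / 2" .
  have "(f x0 + \<eta>) * (g x0 + \<eta>) = f x0 * g x0 + \<eta> * (f x0 + g x0 + \<eta>)"
    by (simp add: algebra_simps)
  also have "\<dots> \<le> f x0 * g x0 + \<eta> * c"
    using \<open>0 < \<eta>\<close> \<open>\<eta> \<le> 1\<close> by (simp add: c_def)
  also have "\<dots> < r"
    using \<eta>c x0 by simp
  finally have bound: "(f x0 + \<eta>) * (g x0 + \<eta>) < r" .
  let ?N = "{x \<in> topspace X. f x < f x0 + \<eta>} \<inter> {x \<in> topspace X. g x < g x0 + \<eta>}"
  have "openin X ?N"
    using f(1) g(1) unfolding upper_semicontinuous_on_def by blast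
  moreover have "x0 \<in> ?N" using x0 \<open>0 < \<eta>\<close> by simp
  moreover have "f x * g x < r" if "x \<in> ?N" for x
  proof -
    have "f x * g x \<le> (f x0 + \<eta>) * (g x0 + \<eta>)"
      using that f(2) g(2) by (intro mult_mono) auto
    with bound show ?thesis by linarith
  qed
  ultimately show "\<exists>N. openin X N \<and> x0 \<in> N \<and> N \<subseteq> {x \<in> topspace X. f x * g x < r}"
    by blast
qed

lemma upper_semicontinuous_on_seminorm_diff:
  assumes ms: "module s" and sn: "\<forall>p\<in>A. seminorm s p" and "p \<in> A"
    and F: "continuous_map T (lc_topology A) F" and G: "continuous_map T (lc_topology A) G"
  shows "upper_semicontinuous_on T (\<lambda>t. p (F t - G t))"
proof -
  have "continuous_map T euclideanreal (\<lambda>t. p ((F t - G t) - 0))"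
    using assms by (intro continuous_map_seminorm_diff[OF ms] continuous_map_lc_topology_diff) auto
  then show ?thesis
    unfolding upper_semicontinuous_on_def continuous_map_upper_lower_semicontinuous_lt by simp
qed

lemma openin_weighted_lt:
  assumes ms: "module s" and sn: "\<forall>p\<in>A. seminorm s p"
    and L: "finite L" "\<forall>(v, p)\<in>L. p \<in> A \<and> upper_semicontinuous_on X v \<and> (\<forall>x\<in>topspace X. 0 \<le> v x)"
    and F: "continuous_map X (lc_topology A) F" and G: "continuous_map X (lc_topology A) G"
  shows "openin X {x \<in> topspace X. \<forall>(v, p)\<in>L. v x * p (F x - G x) < \<epsilon>}"
proof -
  have "openin X ((\<Inter>(v, p)\<in>L. {x \<in> topspace X. v x * p (F x - G x) < \<epsilon>}) \<inter> topspace X)"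
  proof (rule openin_INT[OF L(1)], clarify)
    fix v p assume "(v, p) \<in> L"
    with L(2) have "p \<in> A" "upper_semicontinuous_on X v" "\<forall>x\<in>topspace X. 0 \<le> v x" by auto
    moreover have "\<forall>x\<in>topspace X. 0 \<le> p (F x - G x)"
      using seminorm_nonneg[OF ms] sn \<open>p \<in> A\<close> by blast
    ultimately have "upper_semicontinuous_on X (\<lambda>x. v x * p (F x - G x))"
      by (intro upper_semicontinuous_on_mult upper_semicontinuous_on_seminorm_diff[OF ms sn _ F G])
    then show "openin X {x \<in> topspace X. v x * p (F x - G x) < \<epsilon>}"
      unfolding upper_semicontinuous_on_def by blast
  qed
  also have "(\<Inter>(v, p)\<in>L. {x \<in> topspace X. v x * p (F x - G x) < \<epsilon>}) \<inter> topspace X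
      = {x \<in> topspace X. \<forall>(v, p)\<in>L. v x * p (F x - G x) < \<epsilon>}"
    by auto
  finally show ?thesis .
qed

section \<open>Bump functions on completely regular spaces\<close>

definition bump_at :: "'a topology \<Rightarrow> 'a \<Rightarrow> ('a \<Rightarrow> real) \<Rightarrow> bool" where
  "bump_at X x \<alpha> \<longleftrightarrow> continuous_map X (top_of_set {0..1}) \<alpha> \<and> x \<in> X interior_of {y. \<alpha> y = 1}"

lemma bump_at_bounds: "bump_at X x \<alpha> \<Longrightarrow> y \<in> topspace X \<Longrightarrow> 0 \<le> \<alpha> y \<and> \<alpha> y \<le> 1"
  unfolding bump_at_def using continuous_map_image_subset_topspace by fastforce

lemma completely_regular_space_bump:
  assumes X: "completely_regular_space X" and A: "openin X A" "x \<in> A"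
  obtains \<alpha> where "bump_at X x \<alpha>" "\<forall>t\<in>topspace X. 0 < \<alpha> t \<longrightarrow> t \<in> A"
proof -
  obtain g :: "_ \<Rightarrow> real" where g: "continuous_map X euclideanreal g" "g x = 2"
    "g ` (topspace X - A) \<subseteq> {0}"
    using X[unfolded completely_regular_space_gen_alt'[of 2 0, OF zero_neq_numeral[symmetric]],
        rule_format, OF A]
    by auto
  show ?thesis
  proof (rule that[of "\<lambda>t. max 0 (min 1 (g t))"])
    have "x \<in> X interior_of {t. max 0 (min 1 (g t)) = 1}"
    proof (rule subsetD[OF interior_of_maximal])
      show "openin X {t \<in> topspace X. g t \<in> {1<..}}"
        by (rule openin_continuous_map_preimage[OF g(1)]) simp
      show "{t \<in> topspace X. g t \<in> {1<..}} \<subseteq> {t. max 0 (min 1 (g t)) = 1}"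
        by auto
      show "x \<in> {t \<in> topspace X. g t \<in> {1<..}}"
        using A openin_subset g(2) by fastforce
    qed
    then show "bump_at X x (\<lambda>t. max 0 (min 1 (g t)))"
      unfolding bump_at_def continuous_map_in_subtopology
      by (auto intro!: continuous_map_real_max continuous_map_real_min g(1))
    show "\<forall>t\<in>topspace X. 0 < max 0 (min 1 (g t)) \<longrightarrow> t \<in> A"
      using g(3) by fastforce
  qed
qed

lemma completely_regular_prod_bumps:
  assumes X: "completely_regular_space X" and Y: "completely_regular_space Y"
    and N: "openin (prod_topology X Y) N" "(x, y) \<in> N"
  obtains \<alpha> \<beta> where "bump_at X x \<alpha>" "bump_at Y y \<beta>"
    "\<forall>z\<in>topspace (prod_topology X Y). 0 < \<alpha> (fst z) * \<beta> (snd z) \<longrightarrow> z \<in> N"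
proof -
  obtain A B where AB: "openin X A" "openin Y B" "x \<in> A" "y \<in> B" "A \<times> B \<subseteq> N"
    using N unfolding openin_prod_topology_alt by meson
  obtain \<alpha> where \<alpha>: "bump_at X x \<alpha>" "\<forall>t\<in>topspace X. 0 < \<alpha> t \<longrightarrow> t \<in> A"
    using completely_regular_space_bump[OF X AB(1,3)] by blast
  obtain \<beta> where \<beta>: "bump_at Y y \<beta>" "\<forall>s\<in>topspace Y. 0 < \<beta> s \<longrightarrow> s \<in> B"
    using completely_regular_space_bump[OF Y AB(2,4)] by blast
  have "z \<in> N" if "z \<in> topspace (prod_topology X Y)" "0 < \<alpha> (fst z) * \<beta> (snd z)" for z
  proof -
    have "fst z \<in> topspace X" "snd z \<in> topspace Y"
      using that(1) by (simp_all add: mem_Times_iff)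
    moreover from this have "0 \<le> \<alpha> (fst z)" "0 \<le> \<beta> (snd z)"
      using bump_at_bounds[OF \<alpha>(1)] bump_at_bounds[OF \<beta>(1)] by blast+
    with that(2) have "0 < \<alpha> (fst z)" "0 < \<beta> (snd z)"
      by (auto simp: zero_less_mult_iff)
    ultimately show "z \<in> N"
      using \<alpha>(2) \<beta>(2) AB(5) by (cases z) auto
  qed
  with \<alpha>(1) \<beta>(1) show ?thesis using that by blast
qed

lemma compactin_finite_indexed_subcover:
  assumes "compactin X K" "\<And>z. z \<in> K \<Longrightarrow> openin X (R z)" "\<And>z. z \<in> K \<Longrightarrow> z \<in> R z"
  shows "\<exists>(n::nat) e. (\<forall>j<n. e j \<in> K) \<and> K \<subseteq> (\<Union>j<n. R (e j))"
proof -
  have "K \<subseteq> \<Union> (R ` K)" using assms(3) by blast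
  with assms(1,2) obtain C where C: "finite C" "C \<subseteq> K" "K \<subseteq> \<Union> (R ` C)"
    unfolding compactin_def by (metis (no_types, lifting) finite_subset_image imageE)
  obtain e where "bij_betw e {0..<card C} C"
    using ex_bij_betw_nat_finite[OF C(1)] by blast
  then have eC: "e ` {..<card C} = C"
    by (simp add: bij_betw_def atLeast0LessThan)
  then have "\<forall>j<card C. e j \<in> K" using C(2) by blast
  moreover have "K \<subseteq> (\<Union>j<card C. R (e j))"
    using C(3) eC by (metis image_image)
  ultimately show ?thesis by blast
qed

section \<open>Weighted spaces and their topology\<close>

lemma CV0_scale:
  assumes ms: "module s" and sn: "\<forall>p\<in>A. seminorm s p" and f: "f \<in> CV0 T V s A"
    and \<alpha>: "continuous_map T euclideanreal \<alpha>" "\<forall>t\<in>topspace T. \<bar>\<alpha> t\<bar> \<le> 1"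
  shows "(\<lambda>t. s (complex_of_real (\<alpha> t)) (f t)) \<in> CV0 T V s A"
proof -
  interpret module s by fact
  have "vanishes_at_infinity T A (\<lambda>x. s (complex_of_real (v x)) (s (complex_of_real (\<alpha> x)) (f x)))"
    if v: "v \<in> V" for v
    unfolding vanishes_at_infinity_def
  proof (intro ballI allI impI)
    fix p and e :: real assume p: "p \<in> A" and "0 < e"
    then have snp: "seminorm s p" using sn by blast
    have "compactin T (T closure_of {x \<in> topspace T. e \<le> p (s (complex_of_real (v x)) (f x))})"
      using f v p \<open>0 < e\<close> unfolding CV0_def vanishes_at_infinity_def by blast
    moreover have "p (s (complex_of_real (v x)) (s (complex_of_real (\<alpha> x)) (f x)))
        \<le> p (s (complex_of_real (v x)) (f x))" if "x \<in> topspace T" for x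
    proof -
      have "p (s (complex_of_real (v x)) (s (complex_of_real (\<alpha> x)) (f x)))
          = \<bar>\<alpha> x\<bar> * p (s (complex_of_real (v x)) (f x))"
        by (metis scale_left_commute seminorm_scale_real[OF snp])
      then show ?thesis
        using \<alpha>(2) that seminorm_nonneg[OF ms snp] by (simp add: mult_left_le_one_le)
    qed
    then have "{x \<in> topspace T. e \<le> p (s (complex_of_real (v x)) (s (complex_of_real (\<alpha> x)) (f x)))}
        \<subseteq> {x \<in> topspace T. e \<le> p (s (complex_of_real (v x)) (f x))}"
      by force
    ultimately show "compactin T (T closure_of
        {x \<in> topspace T. e \<le> p (s (complex_of_real (v x)) (s (complex_of_real (\<alpha> x)) (f x)))})"
      by (meson closed_compactin closedin_closure_of closure_of_mono)
  qed
  then show ?thesis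
    using f continuous_map_lc_topology_scale[OF ms sn _ \<alpha>(1)] unfolding CV0_def by auto
qed

lemma CV0_small_outside_compact:
  assumes ms: "module s" and sn: "\<forall>p\<in>A. seminorm s p" and V: "\<forall>v\<in>V. \<forall>x\<in>topspace T. 0 \<le> v x"
    and f: "f \<in> CV0 T V s A" and L: "finite L" "L \<subseteq> V \<times> A" and "0 < \<epsilon>"
  obtains K where "compactin T K" "\<forall>x\<in>topspace T - K. \<forall>(v, p)\<in>L. v x * p (f x) < \<epsilon>"
proof -
  define K where "K = (\<Union>(v, p)\<in>L. T closure_of {x \<in> topspace T. \<epsilon> \<le> p (s (complex_of_real (v x)) (f x))})"
  have "compactin T K"
    unfolding K_def using f L \<open>0 < \<epsilon>\<close>
    by (intro compactin_Union) (auto simp: CV0_def vanishes_at_infinity_def)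
  moreover have "v x * p (f x) < \<epsilon>" if x: "x \<in> topspace T" "x \<notin> K" and vp: "(v, p) \<in> L" for x v p
  proof (rule ccontr)
    assume "\<not> v x * p (f x) < \<epsilon>"
    moreover have "seminorm s p" "0 \<le> v x" using L(2) sn V vp x(1) by auto
    ultimately have "\<epsilon> \<le> p (s (complex_of_real (v x)) (f x))"
      by (simp add: seminorm_scale_real[OF \<open>seminorm s p\<close>])
    with x(1) have "x \<in> T closure_of {x \<in> topspace T. \<epsilon> \<le> p (s (complex_of_real (v x)) (f x))}"
      by (intro subsetD[OF closure_of_subset]) auto
    then have "x \<in> K"
      unfolding K_def using vp by (intro UN_I[of "(v, p)"]) auto
    with x(2) show False by blast
  qed
  ultimately show ?thesis
    using that by blast
qed

text \<open>The basic neighbourhoods of \<open>CV\<^sub>0\<close>, stated pointwise so that no supremum is involved.\<close>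

definition weighted_close_on ::
  "'a set \<Rightarrow> (('a \<Rightarrow> real) \<times> ('z \<Rightarrow> real)) set \<Rightarrow> real \<Rightarrow> ('a \<Rightarrow> 'z::ab_group_add) \<Rightarrow> ('a \<Rightarrow> 'z) \<Rightarrow> bool"
  where "weighted_close_on S L \<epsilon> h f \<longleftrightarrow> (\<forall>(v, p)\<in>L. \<forall>x\<in>S. v x * p (h x - f x) \<le> \<epsilon>)"

lemma weighted_close_on_mono:
  "weighted_close_on S L \<epsilon> h f \<Longrightarrow> L' \<subseteq> L \<Longrightarrow> \<epsilon> \<le> \<epsilon>' \<Longrightarrow> weighted_close_on S L' \<epsilon>' h f"
  unfolding weighted_close_on_def by fastforce

lemma weighted_close_on_patching:
  fixes n :: nat
  assumes ms: "module s" and L: "\<forall>(v, p)\<in>L. seminorm s p \<and> (\<forall>x\<in>S. 0 \<le> v x)"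
    and a: "\<forall>j<n. \<forall>x\<in>S. 0 \<le> a j x \<and> a j x \<le> 1"
    and near: "\<forall>j<n. weighted_close_on {x \<in> S. 0 < a j x} L \<epsilon> (H j) f"
    and small: "\<forall>x\<in>S. (\<forall>j<n. a j x < 1) \<longrightarrow> (\<forall>(v, p)\<in>L. v x * p (f x) \<le> \<epsilon>)"
  shows "weighted_close_on S L \<epsilon> (\<lambda>x. \<Sum>j<n. s (complex_of_real (a j x * (\<Prod>i<j. 1 - a i x))) (H j x)) f"
  unfolding weighted_close_on_def
proof clarify
  fix v p x assume vp: "(v, p) \<in> L" and x: "x \<in> S"
  with L have "seminorm s p" "0 \<le> v x" by auto
  then show "v x * p ((\<Sum>j<n. s (complex_of_real (a j x * (\<Prod>i<j. 1 - a i x))) (H j x)) - f x) \<le> \<epsilon>"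
  proof (rule seminorm_partition_combination_le[OF ms])
    show "\<forall>j<n. 0 \<le> a j x \<and> a j x \<le> 1" using a x by blast
    show "\<forall>j<n. 0 < a j x \<longrightarrow> v x * p (H j x - f x) \<le> \<epsilon>"
      using near x vp unfolding weighted_close_on_def by fastforce
    show "(\<forall>j<n. a j x < 1) \<longrightarrow> v x * p (f x) \<le> \<epsilon>"
      using small x vp by fastforce
  qed
qed

definition weighted_nbhd ::
  "'a set \<Rightarrow> ('a \<Rightarrow> real) set \<Rightarrow> ('z \<Rightarrow> real) set \<Rightarrow> ('a \<Rightarrow> 'z::ab_group_add) \<Rightarrow> ('a \<Rightarrow> 'z) set \<Rightarrow> bool"
  where "weighted_nbhd S V A f G \<longleftrightarrow>
    (\<exists>L \<epsilon>. finite L \<and> L \<subseteq> V \<times> A \<and> 0 < \<epsilon> \<and> {h. weighted_close_on S L \<epsilon> h f} \<subseteq> G)"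

lemma weighted_nbhd_Int:
  assumes "weighted_nbhd S V A f G1" "weighted_nbhd S V A f G2"
  shows "weighted_nbhd S V A f (G1 \<inter> G2)"
proof -
  obtain L1 \<epsilon>1 L2 \<epsilon>2 where L: "finite L1" "L1 \<subseteq> V \<times> A" "0 < \<epsilon>1"
    "{h. weighted_close_on S L1 \<epsilon>1 h f} \<subseteq> G1" "finite L2" "L2 \<subseteq> V \<times> A" "0 < \<epsilon>2"
    "{h. weighted_close_on S L2 \<epsilon>2 h f} \<subseteq> G2"
    using assms unfolding weighted_nbhd_def by blast
  have "weighted_close_on S L1 \<epsilon>1 h f" "weighted_close_on S L2 \<epsilon>2 h f"
    if "weighted_close_on S (L1 \<union> L2) (min \<epsilon>1 \<epsilon>2) h f" for h
    by (rule weighted_close_on_mono[OF that]; simp)+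
  then have "{h. weighted_close_on S (L1 \<union> L2) (min \<epsilon>1 \<epsilon>2) h f} \<subseteq> G1 \<inter> G2"
    using L(4,8) by blast
  with L show ?thesis
    unfolding weighted_nbhd_def by (intro exI[of _ "L1 \<union> L2"] exI[of _ "min \<epsilon>1 \<epsilon>2"]) simp
qed

lemma Sup_real_unbounded: "\<not> bdd_above X \<Longrightarrow> Sup X = (LEAST z::real. False)"
proof -
  assume "\<not> bdd_above X"
  then have "(\<forall>x\<in>X. x \<le> z) \<longleftrightarrow> False" for z
    unfolding bdd_above_def by blast
  then show ?thesis
    unfolding Sup_real_def by (simp only:)
qed

text \<open>An unbounded set of reals has the junk supremum \<open>LEAST z. False\<close>, the same for all
  unbounded sets; this is why the comparison needs the bound in both directions.\<close>

lemma Sup_insert_zero_image_le: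
  fixes a b :: "'a \<Rightarrow> real"
  assumes ab: "\<forall>x\<in>S. a x \<le> d + b x" and ba: "\<forall>x\<in>S. b x \<le> d + a x" and d: "0 \<le> d"
  shows "Sup (insert 0 (a ` S)) \<le> d + Sup (insert 0 (b ` S))"
proof (cases "bdd_above (b ` S)")
  case True
  then have bdd: "bdd_above (insert 0 (b ` S))" by simp
  show ?thesis
  proof (rule cSup_least)
    fix y assume "y \<in> insert 0 (a ` S)"
    then consider "y = 0" | x where "x \<in> S" "y = a x" by blast
    then show "y \<le> d + Sup (insert 0 (b ` S))"
    proof cases
      case 1
      then show ?thesis using d cSup_upper[OF _ bdd, of 0] by simp
    next
      case 2
      then show ?thesis using ab cSup_upper[OF _ bdd, of "b x"] by force
    qed
  qed simp
next
  case False
  have "\<not> bdd_above (a ` S)"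
  proof
    assume "bdd_above (a ` S)"
    then obtain M where "\<forall>x\<in>S. a x \<le> M" by (auto simp: bdd_above_def)
    then have "bdd_above (b ` S)"
      using ba by (intro bdd_aboveI2[of _ _ "d + M"]) force
    with False show False by blast
  qed
  then have "\<not> bdd_above (insert 0 (a ` S))" "\<not> bdd_above (insert 0 (b ` S))"
    using False by simp_all
  then have "Sup (insert 0 (a ` S)) = Sup (insert 0 (b ` S))"
    by (simp add: Sup_real_unbounded)
  then show ?thesis using d by simp
qed

lemma weighted_seminorm_le_perturb:
  assumes ms: "module s" and p: "seminorm s p" and v: "\<forall>x\<in>topspace T. 0 \<le> v x"
    and close: "\<forall>x\<in>topspace T. v x * p (h x - f x) \<le> d" and d: "0 \<le> d"
  shows "weighted_seminorm T v p (\<lambda>x. h x - g x) \<le> d + weighted_seminorm T v p (\<lambda>x. f x - g x)"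
  unfolding weighted_seminorm_def
proof (rule Sup_insert_zero_image_le[OF _ _ d]; intro ballI)
  fix x assume x: "x \<in> topspace T"
  have "v x * p (h x - g x) \<le> v x * (p (h x - f x) + p (f x - g x))"
    using seminorm_diff_triangle[OF p, of "h x" "g x" "f x"] v x by (intro mult_left_mono) auto
  then show "v x * p (h x - g x) \<le> d + v x * p (f x - g x)"
    using close[rule_format, OF x] by (simp add: distrib_left)
  have "v x * p (f x - g x) \<le> v x * (p (h x - f x) + p (h x - g x))"
    using seminorm_diff_triangle[OF p, of "f x" "g x" "h x"] seminorm_diff_commute[OF ms p] v x
    by (intro mult_left_mono) auto
  then show "v x * p (f x - g x) \<le> d + v x * p (h x - g x)"
    using close[rule_format, OF x] by (simp add: distrib_left)
qed

lemma weighted_nbhd_weighted_ball: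
  assumes ms: "module s" and p: "seminorm s p" "p \<in> A" and v: "v \<in> V" "\<forall>x\<in>topspace T. 0 \<le> v x"
    and f: "weighted_seminorm T v p (\<lambda>x. f x - g x) < e"
  shows "weighted_nbhd (topspace T) V A f {h. weighted_seminorm T v p (\<lambda>x. h x - g x) < e}"
  unfolding weighted_nbhd_def
proof (intro exI conjI)
  define D where "D h = weighted_seminorm T v p (\<lambda>x. h x - g x)" for h
  show "0 < (e - D f) / 2"
    using f by (simp add: D_def)
  show "{h. weighted_close_on (topspace T) {(v, p)} ((e - D f) / 2) h f}
      \<subseteq> {h. weighted_seminorm T v p (\<lambda>x. h x - g x) < e}"
  proof clarify
    fix h assume "weighted_close_on (topspace T) {(v, p)} ((e - D f) / 2) h f"
    then have "D h \<le> (e - D f) / 2 + D f"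
      unfolding D_def weighted_close_on_def using f
      by (intro weighted_seminorm_le_perturb[OF ms p(1) v(2)]) auto
    then show "weighted_seminorm T v p (\<lambda>x. h x - g x) < e"
      using f by (simp add: D_def field_simps)
  qed
qed (use p v in auto)

lemma topspace_CV0_topology [simp]: "topspace (CV0_topology T V s A) = CV0 T V s A"
  unfolding CV0_topology_def by simp

lemma openin_CV0_topology_weighted_nbhd:
  assumes N: "openin (CV0_topology T V s A) N" "f \<in> N"
    and ms: "module s" and sn: "\<forall>p\<in>A. seminorm s p" and v: "\<forall>v\<in>V. \<forall>x\<in>topspace T. 0 \<le> v x"
  shows "\<exists>G. weighted_nbhd (topspace T) V A f G \<and> CV0 T V s A \<inter> G \<subseteq> N"
proof -
  define B where "B = insert UNIV
    {{g. weighted_seminorm T v p (\<lambda>x. g x - f' x) < e} | v p f' e. v \<in> V \<and> p \<in> A \<and> e > 0}"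
  have "weighted_nbhd (topspace T) V A f G" if "generate_topology_on B G" "f \<in> G" for G
    using that
  proof (induction rule: generate_topology_on.induct)
    case (Int G1 G2)
    then show ?case by (simp add: weighted_nbhd_Int)
  next
    case (UN K)
    then obtain G where "G \<in> K" "weighted_nbhd (topspace T) V A f G" by blast
    then show ?case unfolding weighted_nbhd_def by blast
  next
    case (Basis G)
    show ?case
    proof (cases "G = UNIV")
      case True
      then show ?thesis unfolding weighted_nbhd_def by (intro exI[of _ "{}"] exI[of _ 1]) simp
    next
      case False
      with Basis.hyps obtain v p g e where "v \<in> V" "p \<in> A" and
        G: "G = {h. weighted_seminorm T v p (\<lambda>x. h x - g x) < e}"
        unfolding B_def by blast
      with Basis.prems sn v show ?thesis
        unfolding G by (intro weighted_nbhd_weighted_ball[OF ms]) auto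
    qed
  qed simp
  moreover obtain G where "generate_topology_on B G" "N = G \<inter> CV0 T V s A"
    using N(1)[unfolded CV0_topology_def openin_subtopology openin_topology_generated_by_iff,
        folded B_def]
    by blast
  ultimately show ?thesis
    using N(2) by blast
qed

lemma CV0_topology_closure_of_eqI:
  assumes ms: "module s" and sn: "\<forall>p\<in>A. seminorm s p" and v: "\<forall>v\<in>V. \<forall>x\<in>topspace T. 0 \<le> v x"
    and sub: "S \<subseteq> CV0 T V s A"
    and approx: "\<And>f L \<epsilon>. f \<in> CV0 T V s A \<Longrightarrow> finite L \<Longrightarrow> L \<subseteq> V \<times> A \<Longrightarrow> 0 < \<epsilon> \<Longrightarrow>
      \<exists>h\<in>S. weighted_close_on (topspace T) L \<epsilon> h f"
  shows "CV0_topology T V s A closure_of S = CV0 T V s A"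
proof
  show "CV0_topology T V s A closure_of S \<subseteq> CV0 T V s A"
    using closure_of_subset_topspace by fastforce
  show "CV0 T V s A \<subseteq> CV0_topology T V s A closure_of S"
  proof (clarsimp simp: in_closure_of)
    fix f N assume f: "f \<in> CV0 T V s A" and "f \<in> N" "openin (CV0_topology T V s A) N"
    then obtain G L \<epsilon> where "CV0 T V s A \<inter> G \<subseteq> N" "finite L" "L \<subseteq> V \<times> A" "0 < \<epsilon>"
      "{h. weighted_close_on (topspace T) L \<epsilon> h f} \<subseteq> G"
      using openin_CV0_topology_weighted_nbhd[OF _ _ ms sn v] unfolding weighted_nbhd_def by meson
    moreover obtain h where "h \<in> S" "weighted_close_on (topspace T) L \<epsilon> h f"
      using approx[OF f \<open>finite L\<close> \<open>L \<subseteq> V \<times> A\<close> \<open>0 < \<epsilon>\<close>] by blast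
    ultimately show "\<exists>h. h \<in> S \<and> h \<in> N" using sub by blast
  qed
qed

section \<open>Tensor products of function spaces\<close>

lemma tensor_product_scale_left:
  assumes "is_tensor_product sX sY sT b"
  shows "b (sX a x) y = sT a (b x y)"
proof -
  have "Vector_Spaces.linear sX sT (\<lambda>x. b x y)"
    using assms unfolding is_tensor_product_def by blast
  from module_hom.scale[OF this[unfolded linear_iff_module_hom]] show ?thesis .
qed

lemma tensor_product_scale_right:
  assumes "is_tensor_product sX sY sT b"
  shows "b x (sY a y) = sT a (b x y)"
proof -
  have "Vector_Spaces.linear sY sT (b x)"
    using assms unfolding is_tensor_product_def by blast
  from module_hom.scale[OF this[unfolded linear_iff_module_hom]] show ?thesis .
qed

lemma tensor_fun_setE:
  assumes "h \<in> tensor_fun_set sT b C1 C2"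
  obtains n :: nat and c f g where "\<forall>i<n. f i \<in> C1 \<and> g i \<in> C2"
    "h = (\<lambda>(t, s). \<Sum>i<n. sT (c i) (b (f i t) (g i s)))"
  using assms unfolding tensor_fun_set_def by blast

lemma zero_in_tensor_fun_set: "(\<lambda>_. 0) \<in> tensor_fun_set sT b C1 C2"
  unfolding tensor_fun_set_def by (intro CollectI exI[of _ 0]) auto

lemma elementary_tensor_in_tensor_fun_set:
  assumes "module sT" "f \<in> C1" "g \<in> C2"
  shows "(\<lambda>(t, s). b (f t) (g s)) \<in> tensor_fun_set sT b C1 C2"
  unfolding tensor_fun_set_def
  by (intro CollectI exI[of _ 1] exI[of _ "\<lambda>_. 1"] exI[of _ "\<lambda>_. f"] exI[of _ "\<lambda>_. g"])
     (use assms in \<open>auto simp: module.scale_one\<close>)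

lemma sum_lessThan_add:
  fixes F :: "nat \<Rightarrow> 'a::comm_monoid_add"
  shows "(\<Sum>i<m + n. F i) = (\<Sum>i<m. F i) + (\<Sum>i<n. F (m + i))"
  by (induction n) (simp_all add: add.assoc)

lemma tensor_fun_set_add:
  assumes "h1 \<in> tensor_fun_set sT b C1 C2" "h2 \<in> tensor_fun_set sT b C1 C2"
  shows "(\<lambda>z. h1 z + h2 z) \<in> tensor_fun_set sT b C1 C2"
proof -
  obtain n1 :: nat and c1 f1 g1 where 1: "\<forall>i<n1. f1 i \<in> C1 \<and> g1 i \<in> C2"
    "h1 = (\<lambda>(t, s). \<Sum>i<n1. sT (c1 i) (b (f1 i t) (g1 i s)))"
    using assms(1) by (rule tensor_fun_setE)
  obtain n2 :: nat and c2 f2 g2 where 2: "\<forall>i<n2. f2 i \<in> C1 \<and> g2 i \<in> C2"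
    "h2 = (\<lambda>(t, s). \<Sum>i<n2. sT (c2 i) (b (f2 i t) (g2 i s)))"
    using assms(2) by (rule tensor_fun_setE)
  define c where "c i = (if i < n1 then c1 i else c2 (i - n1))" for i
  define f where "f i = (if i < n1 then f1 i else f2 (i - n1))" for i
  define g where "g i = (if i < n1 then g1 i else g2 (i - n1))" for i
  have "\<forall>i<n1 + n2. f i \<in> C1 \<and> g i \<in> C2"
  proof (intro allI impI)
    fix i assume i: "i < n1 + n2"
    show "f i \<in> C1 \<and> g i \<in> C2"
    proof (cases "i < n1")
      case False
      with i have "i - n1 < n2" by linarith
      with False show ?thesis using 2(1) by (simp add: f_def g_def)
    qed (use 1(1) in \<open>simp add: f_def g_def\<close>)
  qed
  moreover have "(\<lambda>z. h1 z + h2 z) = (\<lambda>(t, s). \<Sum>i<n1 + n2. sT (c i) (b (f i t) (g i s)))"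
    by (auto simp: 1(2) 2(2) sum_lessThan_add c_def f_def g_def)
  ultimately show ?thesis
    unfolding tensor_fun_set_def by (intro CollectI exI[of _ "n1 + n2"] exI[of _ c] exI[of _ f] exI[of _ g] conjI)
qed

lemma tensor_fun_set_scale:
  assumes "module sT" "h \<in> tensor_fun_set sT b C1 C2"
  shows "(\<lambda>z. sT a (h z)) \<in> tensor_fun_set sT b C1 C2"
proof -
  interpret module sT by fact
  obtain n :: nat and c f g where 1: "\<forall>i<n. f i \<in> C1 \<and> g i \<in> C2"
    "h = (\<lambda>(t, s). \<Sum>i<n. sT (c i) (b (f i t) (g i s)))"
    using assms(2) by (rule tensor_fun_setE)
  have "(\<lambda>z. sT a (h z)) = (\<lambda>(t, s). \<Sum>i<n. sT (a * c i) (b (f i t) (g i s)))"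
    by (auto simp: 1(2) scale_sum_right)
  then show ?thesis
    using 1(1) unfolding tensor_fun_set_def
    by (intro CollectI exI[of _ n] exI[of _ "\<lambda>i. a * c i"] exI[of _ f] exI[of _ g]) simp
qed

lemma tensor_fun_set_sum:
  fixes N :: nat
  assumes "\<forall>j<N. H j \<in> tensor_fun_set sT b C1 C2"
  shows "(\<lambda>z. \<Sum>j<N. H j z) \<in> tensor_fun_set sT b C1 C2"
  using assms
  by (induction N) (simp_all add: zero_in_tensor_fun_set tensor_fun_set_add)

lemma tensor_fun_set_mult:
  assumes mT: "module sT" and tensor: "is_tensor_product sX sY sT b"
    and h: "h \<in> tensor_fun_set sT b C1 C2"
    and \<alpha>: "\<forall>f\<in>C1. (\<lambda>t. sX (complex_of_real (\<alpha> t)) (f t)) \<in> C1"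
    and \<beta>: "\<forall>g\<in>C2. (\<lambda>s. sY (complex_of_real (\<beta> s)) (g s)) \<in> C2"
  shows "(\<lambda>x. sT (complex_of_real (\<alpha> (fst x) * \<beta> (snd x))) (h x)) \<in> tensor_fun_set sT b C1 C2"
proof -
  interpret module sT by fact
  obtain n :: nat and c f g where 1: "\<forall>i<n. f i \<in> C1 \<and> g i \<in> C2"
    "h = (\<lambda>(t, s). \<Sum>i<n. sT (c i) (b (f i t) (g i s)))"
    using h by (rule tensor_fun_setE)
  define f' where "f' i t = sX (complex_of_real (\<alpha> t)) (f i t)" for i t
  define g' where "g' i s = sY (complex_of_real (\<beta> s)) (g i s)" for i s
  have "\<forall>i<n. f' i \<in> C1 \<and> g' i \<in> C2"
    using 1(1) \<alpha> \<beta> unfolding f'_def[abs_def] g'_def[abs_def] by blast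
  moreover have "(\<lambda>x. sT (complex_of_real (\<alpha> (fst x) * \<beta> (snd x))) (h x))
      = (\<lambda>(t, s). \<Sum>i<n. sT (c i) (b (f' i t) (g' i s)))"
    by (auto simp: 1(2) f'_def g'_def tensor_product_scale_left[OF tensor]
        tensor_product_scale_right[OF tensor] scale_sum_right mult_ac)
  ultimately show ?thesis
    unfolding tensor_fun_set_def by (intro CollectI exI[of _ n] exI[of _ c] exI[of _ f'] exI[of _ g'] conjI)
qed

lemma tensor_fun_set_mult_prod:
  fixes n :: nat
  assumes mT: "module sT" and tensor: "is_tensor_product sX sY sT b"
    and closed: "\<forall>i<n. (\<forall>f\<in>C1. (\<lambda>t. sX (complex_of_real (\<alpha> i t)) (f t)) \<in> C1) \<and>
                       (\<forall>g\<in>C2. (\<lambda>s. sY (complex_of_real (\<beta> i s)) (g s)) \<in> C2)"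
    and h: "h \<in> tensor_fun_set sT b C1 C2"
  shows "(\<lambda>x. sT (complex_of_real (\<Prod>i<n. 1 - \<alpha> i (fst x) * \<beta> i (snd x))) (h x))
           \<in> tensor_fun_set sT b C1 C2"
  using closed h
proof (induction n arbitrary: h)
  case 0
  then show ?case by (simp add: module.scale_one[OF mT])
next
  case (Suc n)
  interpret module sT by fact
  define h' where "h' x = h x + sT (-1) (sT (complex_of_real (\<alpha> n (fst x) * \<beta> n (snd x))) (h x))" for x
  have "h' \<in> tensor_fun_set sT b C1 C2"
    unfolding h'_def using Suc.prems
    by (intro tensor_fun_set_add tensor_fun_set_scale[OF mT] tensor_fun_set_mult[OF mT tensor]) auto
  then have "(\<lambda>x. sT (complex_of_real (\<Prod>i<n. 1 - \<alpha> i (fst x) * \<beta> i (snd x))) (h' x))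
      \<in> tensor_fun_set sT b C1 C2"
    using Suc.IH Suc.prems(1) by simp
  moreover have "sT (complex_of_real (\<Prod>i<n. 1 - \<alpha> i (fst x) * \<beta> i (snd x))) (h' x)
      = sT (complex_of_real (\<Prod>i<Suc n. 1 - \<alpha> i (fst x) * \<beta> i (snd x))) (h x)" for x
    by (simp add: h'_def algebra_simps)
  ultimately show ?case by simp
qed

lemma tensor_fun_set_partition_combination:
  fixes n :: nat
  assumes mT: "module sT" and tensor: "is_tensor_product sX sY sT b"
    and H: "\<forall>j<n. H j \<in> tensor_fun_set sT b C1 C2"
    and closed: "\<forall>i<n. (\<forall>f\<in>C1. (\<lambda>t. sX (complex_of_real (\<alpha> i t)) (f t)) \<in> C1) \<and>
                       (\<forall>g\<in>C2. (\<lambda>s. sY (complex_of_real (\<beta> i s)) (g s)) \<in> C2)"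
  shows "(\<lambda>x. \<Sum>j<n. sT (complex_of_real (\<alpha> j (fst x) * \<beta> j (snd x) *
            (\<Prod>i<j. 1 - \<alpha> i (fst x) * \<beta> i (snd x)))) (H j x)) \<in> tensor_fun_set sT b C1 C2"
proof (rule tensor_fun_set_sum, intro allI impI)
  fix j assume "j < n"
  then have "(\<lambda>x. sT (complex_of_real (\<alpha> j (fst x) * \<beta> j (snd x))) (H j x)) \<in> tensor_fun_set sT b C1 C2"
    using H closed by (intro tensor_fun_set_mult[OF mT tensor]) auto
  with \<open>j < n\<close> closed
  have "(\<lambda>x. sT (complex_of_real (\<Prod>i<j. 1 - \<alpha> i (fst x) * \<beta> i (snd x)))
            (sT (complex_of_real (\<alpha> j (fst x) * \<beta> j (snd x))) (H j x))) \<in> tensor_fun_set sT b C1 C2"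
    by (intro tensor_fun_set_mult_prod[OF mT tensor]) auto
  then show "(\<lambda>x. sT (complex_of_real (\<alpha> j (fst x) * \<beta> j (snd x) *
            (\<Prod>i<j. 1 - \<alpha> i (fst x) * \<beta> i (snd x)))) (H j x)) \<in> tensor_fun_set sT b C1 C2"
    by (simp add: module.scale_scale[OF mT] mult.commute)
qed

lemma tensor_set_subset_eval_tensor_fun_set:
  assumes mT: "module sT"
  shows "tensor_set sT b ((\<lambda>f. f t) ` C1) ((\<lambda>g. g s) ` C2)
    \<subseteq> (\<lambda>h. h (t, s)) ` tensor_fun_set sT b C1 C2"
  unfolding tensor_set_def
proof (rule module.span_minimal[OF mT])
  interpret module sT by fact
  let ?E = "(\<lambda>h. h (t, s)) ` tensor_fun_set sT b C1 C2"
  show "{b x y |x y. x \<in> (\<lambda>f. f t) ` C1 \<and> y \<in> (\<lambda>g. g s) ` C2} \<subseteq> ?E"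
  proof clarify
    fix f g assume "f \<in> C1" "g \<in> C2"
    from elementary_tensor_in_tensor_fun_set[OF mT this]
    show "b (f t) (g s) \<in> ?E" by (rule rev_image_eqI) simp
  qed
  show "subspace ?E"
  proof (rule subspaceI)
    show "0 \<in> ?E" by (rule rev_image_eqI[OF zero_in_tensor_fun_set]) simp
    show "x + y \<in> ?E" if xy: "x \<in> ?E" "y \<in> ?E" for x y
    proof -
      obtain h1 h2 where "h1 \<in> tensor_fun_set sT b C1 C2" "h2 \<in> tensor_fun_set sT b C1 C2"
        "x = h1 (t, s)" "y = h2 (t, s)"
        using xy by blast
      then show ?thesis by (intro rev_image_eqI[OF tensor_fun_set_add]) auto
    qed
    show "sT c x \<in> ?E" if "x \<in> ?E" for c x
      using that by (auto intro!: rev_image_eqI[OF tensor_fun_set_scale[OF mT]])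
  qed
qed

section \<open>Approximation by tensor functions\<close>

lemma tensor_fun_set_weighted_close_at:
  assumes mT: "module sT" and snT: "\<forall>p\<in>ST. seminorm sT p"
    and pointwise: "f (t, s) \<in> lc_topology ST closure_of tensor_set sT b ((\<lambda>f. f t) ` C1) ((\<lambda>g. g s) ` C2)"
    and L: "finite L" "snd ` L \<subseteq> ST" "\<forall>(v, p)\<in>L. 0 \<le> v (t, s)" and "0 < \<epsilon>"
  obtains h where "h \<in> tensor_fun_set sT b C1 C2" "\<forall>(v, p)\<in>L. v (t, s) * p (h (t, s) - f (t, s)) < \<epsilon>"
proof -
  define M where "M = (\<Sum>(v, p)\<in>L. v (t, s))"
  have vM: "v (t, s) \<le> M" if "(v, p) \<in> L" for v p
    using that L(1,3) unfolding M_def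
    by (auto intro!: member_le_sum[of "(v, p)", where f = "\<lambda>(v, p). v (t, s)", simplified])
  have "0 \<le> M"
    unfolding M_def using L(3) by (intro sum_nonneg) auto
  define \<delta> where "\<delta> = \<epsilon> / (M + 1)"
  have "0 < \<delta>" using \<open>0 \<le> M\<close> \<open>0 < \<epsilon>\<close> by (simp add: \<delta>_def)
  then obtain y where y: "y \<in> tensor_set sT b ((\<lambda>f. f t) ` C1) ((\<lambda>g. g s) ` C2)"
    "\<forall>p\<in>snd ` L. p (y - f (t, s)) < \<delta>"
    using in_lc_closure_of_approx[OF mT snT pointwise finite_imageI[OF L(1)] L(2)] by blast
  from subsetD[OF tensor_set_subset_eval_tensor_fun_set[OF mT] y(1)]
  obtain h where h: "h \<in> tensor_fun_set sT b C1 C2" "h (t, s) = y"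
    by (metis imageE)
  have "v (t, s) * p (h (t, s) - f (t, s)) < \<epsilon>" if "(v, p) \<in> L" for v p
  proof -
    have "seminorm sT p" using that L(2) snT by force
    moreover have "p (h (t, s) - f (t, s)) < \<delta>" using y(2) h(2) that by force
    ultimately have "v (t, s) * p (h (t, s) - f (t, s)) \<le> M * \<delta>"
      using vM[OF that] L(3) that by (intro mult_mono) (auto simp: seminorm_nonneg[OF mT])
    also have "\<dots> < \<epsilon>"
      using \<open>0 \<le> M\<close> \<open>0 < \<epsilon>\<close> by (simp add: \<delta>_def field_simps)
    finally show ?thesis .
  qed
  with h(1) show ?thesis using that by blast
qed

lemma tensor_fun_set_local_approximation:
  fixes TI :: "'i topology" and TJ :: "'j topology"
  assumes mT: "module sT" and snT: "\<forall>p\<in>ST. seminorm sT p"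
    and I: "completely_regular_space TI" and J: "completely_regular_space TJ"
    and U: "nachbin_family (prod_topology TI TJ) U"
    and sub: "tensor_fun_set sT b C1 C2 \<subseteq> CV0 (prod_topology TI TJ) U sT ST"
    and f: "f \<in> CV0 (prod_topology TI TJ) U sT ST"
    and pointwise: "f (t0, s0) \<in> lc_topology ST closure_of tensor_set sT b ((\<lambda>f. f t0) ` C1) ((\<lambda>g. g s0) ` C2)"
    and L: "finite L" "L \<subseteq> U \<times> ST" and "0 < \<epsilon>"
    and t0: "t0 \<in> topspace TI" and s0: "s0 \<in> topspace TJ"
  obtains h \<alpha> \<beta> where "h \<in> tensor_fun_set sT b C1 C2" "bump_at TI t0 \<alpha>" "bump_at TJ s0 \<beta>"
    "weighted_close_on {x \<in> topspace (prod_topology TI TJ). 0 < \<alpha> (fst x) * \<beta> (snd x)} L \<epsilon> h f"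
proof -
  define P where "P = prod_topology TI TJ"
  have Uv: "\<forall>(v, p)\<in>L. p \<in> ST \<and> upper_semicontinuous_on P v \<and> (\<forall>x\<in>topspace P. 0 \<le> v x)"
    using U L(2) unfolding nachbin_family_def P_def by blast
  have z: "(t0, s0) \<in> topspace P" using t0 s0 by (simp add: P_def)
  with Uv L(2) have "snd ` L \<subseteq> ST" "\<forall>(v, p)\<in>L. 0 \<le> v (t0, s0)" by auto
  then obtain h where h: "h \<in> tensor_fun_set sT b C1 C2"
    "\<forall>(v, p)\<in>L. v (t0, s0) * p (h (t0, s0) - f (t0, s0)) < \<epsilon>"
    using tensor_fun_set_weighted_close_at[where f = f and t = t0 and s = s0, OF mT snT pointwise L(1)]
      \<open>0 < \<epsilon>\<close>
    by blast
  define N where "N = {x \<in> topspace P. \<forall>(v, p)\<in>L. v x * p (h x - f x) < \<epsilon>}"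
  have "openin P N"
    unfolding N_def using Uv h(1) sub f unfolding P_def CV0_def
    by (intro openin_weighted_lt[OF mT snT L(1)]) auto
  moreover have "(t0, s0) \<in> N"
    using z h(2) by (simp add: N_def)
  ultimately obtain \<alpha> \<beta> where "bump_at TI t0 \<alpha>" "bump_at TJ s0 \<beta>"
    "\<forall>x\<in>topspace P. 0 < \<alpha> (fst x) * \<beta> (snd x) \<longrightarrow> x \<in> N"
    using completely_regular_prod_bumps[OF I J] unfolding P_def by blast
  moreover from this(3)
  have "weighted_close_on {x \<in> topspace P. 0 < \<alpha> (fst x) * \<beta> (snd x)} L \<epsilon> h f"
    unfolding weighted_close_on_def N_def by (fastforce simp: less_imp_le)
  ultimately show ?thesis using that h(1) unfolding P_def by blast
qed

lemma tensor_fun_set_approximation: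
  fixes TI :: "'i topology" and TJ :: "'j topology" and f :: "'i \<times> 'j \<Rightarrow> 't::ab_group_add"
  assumes mT: "module sT" and snT: "\<forall>p\<in>ST. seminorm sT p" and tensor: "is_tensor_product sX sY sT b"
    and I: "completely_regular_space TI" and J: "completely_regular_space TJ"
    and U: "nachbin_family (prod_topology TI TJ) U"
    and C1: "\<And>\<alpha> f. continuous_map TI (top_of_set {0..1::real}) \<alpha> \<Longrightarrow> f \<in> C1 \<Longrightarrow>
      (\<lambda>t. sX (complex_of_real (\<alpha> t)) (f t)) \<in> C1"
    and C2: "\<And>\<beta> g. continuous_map TJ (top_of_set {0..1::real}) \<beta> \<Longrightarrow> g \<in> C2 \<Longrightarrow>
      (\<lambda>s. sY (complex_of_real (\<beta> s)) (g s)) \<in> C2"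
    and sub: "tensor_fun_set sT b C1 C2 \<subseteq> CV0 (prod_topology TI TJ) U sT ST"
    and f: "f \<in> CV0 (prod_topology TI TJ) U sT ST"
    and pointwise: "\<And>t s. t \<in> topspace TI \<Longrightarrow> s \<in> topspace TJ \<Longrightarrow>
      f (t, s) \<in> lc_topology ST closure_of tensor_set sT b ((\<lambda>f. f t) ` C1) ((\<lambda>g. g s) ` C2)"
    and L: "finite L" "L \<subseteq> U \<times> ST" and "0 < \<epsilon>"
  shows "\<exists>h\<in>tensor_fun_set sT b C1 C2. weighted_close_on (topspace (prod_topology TI TJ)) L \<epsilon> h f"
proof -
  define P where "P = prod_topology TI TJ"
  have U0: "\<forall>v\<in>U. \<forall>x\<in>topspace P. 0 \<le> v x"
    using U unfolding nachbin_family_def P_def by blast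
  obtain K where K: "compactin P K" and small: "\<forall>x\<in>topspace P - K. \<forall>(v, p)\<in>L. v x * p (f x) < \<epsilon>"
    using CV0_small_outside_compact[OF mT snT U0 f[folded P_def] L \<open>0 < \<epsilon>\<close>] by blast
  define good where "good z H \<alpha> \<beta> \<longleftrightarrow> H \<in> tensor_fun_set sT b C1 C2 \<and>
      bump_at TI (fst z) \<alpha> \<and> bump_at TJ (snd z) \<beta> \<and>
      weighted_close_on {x \<in> topspace P. 0 < \<alpha> (fst x) * \<beta> (snd x)} L \<epsilon> H f" for z H \<alpha> \<beta>
  have "\<exists>H \<alpha> \<beta>. good z H \<alpha> \<beta>" if "z \<in> K" for z
  proof -
    have z: "fst z \<in> topspace TI" "snd z \<in> topspace TJ"
      using compactin_subset_topspace[OF K] that by (auto simp: P_def)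
    obtain h \<alpha> \<beta> where "h \<in> tensor_fun_set sT b C1 C2" "bump_at TI (fst z) \<alpha>" "bump_at TJ (snd z) \<beta>"
      "weighted_close_on {x \<in> topspace (prod_topology TI TJ). 0 < \<alpha> (fst x) * \<beta> (snd x)} L \<epsilon> h f"
      by (rule tensor_fun_set_local_approximation[OF mT snT I J U sub f pointwise[OF z] L \<open>0 < \<epsilon>\<close> z])
    then show ?thesis unfolding good_def P_def by blast
  qed
  then obtain H \<alpha> \<beta> where "\<forall>z\<in>K. good z (H z) (\<alpha> z) (\<beta> z)"
    by metis
  then have H: "\<forall>z\<in>K. H z \<in> tensor_fun_set sT b C1 C2"
    and bumps: "\<forall>z\<in>K. bump_at TI (fst z) (\<alpha> z) \<and> bump_at TJ (snd z) (\<beta> z)"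
    and close: "\<forall>z\<in>K. weighted_close_on {x \<in> topspace P. 0 < \<alpha> z (fst x) * \<beta> z (snd x)} L \<epsilon> (H z) f"
    unfolding good_def by simp_all
  define R where "R z = (TI interior_of {t. \<alpha> z t = 1}) \<times> (TJ interior_of {s. \<beta> z s = 1})" for z
  have "\<exists>(n::nat) e. (\<forall>j<n. e j \<in> K) \<and> K \<subseteq> (\<Union>j<n. R (e j))"
  proof (rule compactin_finite_indexed_subcover[OF K])
    show "openin P (R z)" for z by (simp add: R_def P_def openin_prod_Times_iff)
    show "z \<in> R z" if "z \<in> K" for z using that bumps by (simp add: R_def bump_at_def mem_Times_iff)
  qed
  then obtain n :: nat and e where e: "\<And>j. j < n \<Longrightarrow> e j \<in> K" and cover: "K \<subseteq> (\<Union>j<n. R (e j))"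
    by blast
  define a where "a j x = \<alpha> (e j) (fst x) * \<beta> (e j) (snd x)" for j x
  have "\<forall>j<n. H (e j) \<in> tensor_fun_set sT b C1 C2"
    using e H by blast
  moreover have "\<forall>i<n. (\<forall>f\<in>C1. (\<lambda>t. sX (complex_of_real (\<alpha> (e i) t)) (f t)) \<in> C1) \<and>
                       (\<forall>g\<in>C2. (\<lambda>s. sY (complex_of_real (\<beta> (e i) s)) (g s)) \<in> C2)"
    using C1 C2 e bumps unfolding bump_at_def by blast
  ultimately have "(\<lambda>x. \<Sum>j<n. sT (complex_of_real (a j x * (\<Prod>i<j. 1 - a i x))) (H (e j) x))
      \<in> tensor_fun_set sT b C1 C2"
    unfolding a_def
    by (rule tensor_fun_set_partition_combination[OF mT tensor,
          where H = "\<lambda>j. H (e j)" and \<alpha> = "\<lambda>j. \<alpha> (e j)" and \<beta> = "\<lambda>j. \<beta> (e j)"])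
  moreover have "weighted_close_on (topspace P) L \<epsilon>
      (\<lambda>x. \<Sum>j<n. sT (complex_of_real (a j x * (\<Prod>i<j. 1 - a i x))) (H (e j) x)) f"
  proof (rule weighted_close_on_patching[OF mT])
    show "\<forall>(v, p)\<in>L. seminorm sT p \<and> (\<forall>x\<in>topspace P. 0 \<le> v x)"
      using L(2) snT U0 by blast
    show "\<forall>j<n. \<forall>x\<in>topspace P. 0 \<le> a j x \<and> a j x \<le> 1"
    proof (intro allI impI ballI)
      fix j x assume "j < n" "x \<in> topspace P"
      with e bumps have "bump_at TI (fst (e j)) (\<alpha> (e j))" "bump_at TJ (snd (e j)) (\<beta> (e j))"
        "fst x \<in> topspace TI" "snd x \<in> topspace TJ"
        by (auto simp: P_def mem_Times_iff)
      then show "0 \<le> a j x \<and> a j x \<le> 1"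
        unfolding a_def by (meson bump_at_bounds mult_le_one mult_nonneg_nonneg)
    qed
    show "\<forall>j<n. weighted_close_on {x \<in> topspace P. 0 < a j x} L \<epsilon> (H (e j)) f"
      using close e unfolding a_def by blast
    show "\<forall>x\<in>topspace P. (\<forall>j<n. a j x < 1) \<longrightarrow> (\<forall>(v, p)\<in>L. v x * p (f x) \<le> \<epsilon>)"
    proof (rule ballI, rule impI)
      fix x assume x: "x \<in> topspace P" "\<forall>j<n. a j x < 1"
      have "x \<notin> K"
      proof
        assume "x \<in> K"
        with cover obtain j where "j < n" "x \<in> R (e j)" by blast
        then have "\<alpha> (e j) (fst x) = 1" "\<beta> (e j) (snd x) = 1"
          using interior_of_subset unfolding R_def mem_Times_iff by fastforce+
        with x(2) \<open>j < n\<close> show False by (fastforce simp: a_def)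
      qed
      with x(1) small have "\<forall>(v, p)\<in>L. v x * p (f x) < \<epsilon>" by blast
      then show "\<forall>(v, p)\<in>L. v x * p (f x) \<le> \<epsilon>" by fastforce
    qed
  qed
  ultimately show ?thesis unfolding P_def by blast
qed

theorem theorem3p24:
  fixes TI :: "'i topology" and TJ :: "'j topology"
    and sX :: "complex \<Rightarrow> 'x::ab_group_add \<Rightarrow> 'x" and SX :: "('x \<Rightarrow> real) set"
    and sY :: "complex \<Rightarrow> 'y::ab_group_add \<Rightarrow> 'y" and SY :: "('y \<Rightarrow> real) set"
    and sT :: "complex \<Rightarrow> 't::ab_group_add \<Rightarrow> 't" and ST :: "('t \<Rightarrow> real) set"
    and b :: "'x \<Rightarrow> 'y \<Rightarrow> 't"
    and V :: "('i \<Rightarrow> real) set" and W :: "('j \<Rightarrow> real) set" and U :: "('i \<times> 'j \<Rightarrow> real) set"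
  assumes I: "completely_regular_space TI" "Hausdorff_space TI"
    and J: "completely_regular_space TJ" "Hausdorff_space TJ"
    and X: "locally_convex_space sX SX" "Hausdorff_space (lc_topology SX)"
    and Y: "locally_convex_space sY SY" "Hausdorff_space (lc_topology SY)"
    and tensor: "is_tensor_product sX sY sT b"
    and XY: "locally_convex_space sT ST" "Hausdorff_space (lc_topology ST)"
    and b_cont: "continuous_map (prod_topology (lc_topology SX) (lc_topology SY)) (lc_topology ST)
                   (\<lambda>(x, y). b x y)"
    and V: "nachbin_family TI V" and W: "nachbin_family TJ W"
    and U: "nachbin_family (prod_topology TI TJ) U"
    and hyp_i: "\<And>t s. t \<in> topspace TI \<Longrightarrow> s \<in> topspace TJ \<Longrightarrow>
        lc_topology ST closure_of
          tensor_set sT b ((\<lambda>f. f t) ` CV0 TI V sX SX) ((\<lambda>g. g s) ` CV0 TJ W sY SY)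
        = lc_topology ST closure_of ((\<lambda>h. h (t, s)) ` CV0 (prod_topology TI TJ) U sT ST)"
    and hyp_ii: "tensor_fun_set sT b (CV0 TI V sX SX) (CV0 TJ W sY SY)
                   \<subseteq> CV0 (prod_topology TI TJ) U sT ST"
  shows "CV0_topology (prod_topology TI TJ) U sT ST closure_of
           tensor_fun_set sT b (CV0 TI V sX SX) (CV0 TJ W sY SY)
         = CV0 (prod_topology TI TJ) U sT ST"
proof -
  note mX = locally_convex_spaceD[OF X(1)] and mY = locally_convex_spaceD[OF Y(1)]
    and mT = locally_convex_spaceD[OF XY(1)]
  have U0: "\<forall>v\<in>U. \<forall>x\<in>topspace (prod_topology TI TJ). 0 \<le> v x"
    using U unfolding nachbin_family_def by blast
  show ?thesis
  proof (rule CV0_topology_closure_of_eqI[OF conjunct1[OF mT] conjunct2[OF mT] U0 hyp_ii])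
    fix f L and \<epsilon> :: real
    assume "f \<in> CV0 (prod_topology TI TJ) U sT ST" "finite L" "L \<subseteq> U \<times> ST" "0 < \<epsilon>"
    then show "\<exists>h\<in>tensor_fun_set sT b (CV0 TI V sX SX) (CV0 TJ W sY SY).
        weighted_close_on (topspace (prod_topology TI TJ)) L \<epsilon> h f"
    proof (intro tensor_fun_set_approximation[OF conjunct1[OF mT] conjunct2[OF mT] tensor I(1) J(1) U _ _ hyp_ii])
      show "(\<lambda>t. sX (complex_of_real (\<alpha> t)) (g t)) \<in> CV0 TI V sX SX"
        if "continuous_map TI (top_of_set {0..1::real}) \<alpha>" "g \<in> CV0 TI V sX SX" for \<alpha> g
        using that mX by (intro CV0_scale) (auto simp: continuous_map_in_subtopology Pi_iff)
      show "(\<lambda>s. sY (complex_of_real (\<beta> s)) (g s)) \<in> CV0 TJ W sY SY"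
        if "continuous_map TJ (top_of_set {0..1::real}) \<beta>" "g \<in> CV0 TJ W sY SY" for \<beta> g
        using that mY by (intro CV0_scale) (auto simp: continuous_map_in_subtopology Pi_iff)
      show "f (t, s) \<in> lc_topology ST closure_of
          tensor_set sT b ((\<lambda>f. f t) ` CV0 TI V sX SX) ((\<lambda>g. g s) ` CV0 TJ W sY SY)"
        if "t \<in> topspace TI" "s \<in> topspace TJ" for t s
        unfolding hyp_i[OF that] using \<open>f \<in> CV0 _ U sT ST\<close> by (intro closure_of_subset[THEN subsetD]) auto
    qed
  qed
qed

end
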